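(* Let $K=3$ and let $l\ge m>0$ be integers. Then \[ h(l,\,m,\,0)\ \le\ h(l-1,\,m-1,\,1)+1. \]
   Context: For a vector $\vec n=(n_1,n_2,n_3)$ of nonnegative integers, the following random process is run: stocks start at $\vec n^{(0)}=\vec n$; at each step $t=1,2,\dots$, as long as at least two coordinates of $\vec n^{(t-1)}$ are nonzero, an index $i$ is chosen uniformly at random (independently of the past) among the indices with $n_i^{(t-1)}>0$, and $\vec n^{(t)}=\vec n^{(t-1)}-\vec e_i$ ($\vec e_i$ the $i$-th standard unit vector). The process stops at the first time $T$ at which at most one coordinate is nonzero, and $h(\vec n)=\mathbb{E}[T]$. Equivalently, with $\operatorname{support}(\vec n)=\{i:n_i\ne 0\}$: $h(\vec n)=0$ if $|\operatorname{support}(\vec n)|\le1$, and otherwise $h(\vec n)=1+\frac{1}{|\operatorname{support}(\vec n)|}\sum_{i\in\operatorname{support}(\vec n)}h(\vec n-\vec e_i)$. *)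

theory Defs
  imports Complex_Main
begin

text \<open>Expected stopping time h of the K = 3 stock process, for the stock vector (a, b, c).
  nsupp a b c is the size of the support of (a, b, c); each summand corresponds to an index i
  in the support, with the recursive call on (a, b, c) - e_i.\<close>

definition nsupp :: "nat \<Rightarrow> nat \<Rightarrow> nat \<Rightarrow> nat" where
  "nsupp a b c = card {i::nat. i < 3 \<and> [a, b, c] ! i \<noteq> 0}"

function h :: "nat \<Rightarrow> nat \<Rightarrow> nat \<Rightarrow> real" where
  "h a b c =
     (if nsupp a b c \<le> 1 then 0
      else 1 + ((if a \<noteq> 0 then h (a - 1) b c else 0)
              + (if b \<noteq> 0 then h a (b - 1) c else 0)
              + (if c \<noteq> 0 then h a b (c - 1) else 0)) / real (nsupp a b c))"
  by pat_completeness auto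
termination
  by (relation "measure (\<lambda>(a, b, c). a + b + c)") auto

end

theory Submission
  imports Defs
begin

text \<open>Write g a b = h a b 0 for the two-stock process. The claim g (a+1) (b+1) \<le> h a b 1 + 1
  follows by induction on a + b: unfolding g (a+2) (b+2) two steps and h (a+1) (b+1) 1 one step,
  and bounding the two middle terms g (a+1) (b+2), g (a+2) (b+1) by the induction hypothesis,
  leaves exactly the inequality g a (b+2) + g (a+2) b \<le> 2 g (a+1) (b+1), i.e. concavity of g
  along antidiagonals. Concavity is again proved by induction on a + b, the boundary case
  g 2 b \<le> 2 g 1 (b+1) following from g 1 b \<le> 2.\<close>

declare h.simps [simp del]

lemma nsupp_eq_of_bool: "nsupp a b c = of_bool (a \<noteq> 0) + of_bool (b \<noteq> 0) + of_bool (c \<noteq> 0)"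
proof -
  have "{i::nat. i < 3 \<and> [a, b, c] ! i \<noteq> 0} =
      (if a \<noteq> 0 then {0} else {}) \<union> (if b \<noteq> 0 then {1} else {}) \<union> (if c \<noteq> 0 then {2} else {})"
  proof (rule set_eqI)
    fix i :: nat
    show "i \<in> {i. i < 3 \<and> [a, b, c] ! i \<noteq> 0} \<longleftrightarrow>
        i \<in> (if a \<noteq> 0 then {0} else {}) \<union> (if b \<noteq> 0 then {1} else {}) \<union> (if c \<noteq> 0 then {2} else {})"
      by (cases "i = 0 \<or> i = 1 \<or> i = 2") auto
  qed
  then show ?thesis
    unfolding nsupp_def by auto
qed

lemma h_nonneg: "0 \<le> h a b c"
proof (induction a b c rule: h.induct)
  case (1 a b c)
  then show ?case
    by (subst h.simps) (auto intro!: add_nonneg_nonneg divide_nonneg_nonneg)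
qed

lemma h_swap_12: "h a b c = h b a c"
proof (induction a b c rule: h.induct)
  case (1 a b c)
  then show ?case
    by (subst (1 2) h.simps) (auto simp: nsupp_eq_of_bool ac_simps)
qed

lemma h_swap_23: "h a b c = h a c b"
proof (induction a b c rule: h.induct)
  case (1 a b c)
  then show ?case
    by (subst (1 2) h.simps) (auto simp: nsupp_eq_of_bool ac_simps)
qed

lemma h_0_0 [simp]: "h a 0 0 = 0" "h 0 b 0 = 0"
  by (subst h.simps; simp add: nsupp_eq_of_bool)+

lemma h_Suc_Suc_0: "h (Suc a) (Suc b) 0 = 1 + (h a (Suc b) 0 + h (Suc a) b 0) / 2"
  by (subst h.simps) (simp add: nsupp_eq_of_bool)

lemma h_Suc_Suc_Suc:
  "h (Suc a) (Suc b) (Suc c) =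
     1 + (h a (Suc b) (Suc c) + h (Suc a) b (Suc c) + h (Suc a) (Suc b) c) / 3"
  by (subst h.simps) (simp add: nsupp_eq_of_bool)

lemma h_1_0_le_2: "h 1 b 0 \<le> 2"
proof (induction b)
  case (Suc b)
  then show ?case
    using h_Suc_Suc_0 [of 0 b] by simp
qed simp

lemma h_2_0_le: "h 2 b 0 \<le> 2 * h 1 (Suc b) 0"
proof (induction b)
  case 0
  show ?case
    using h_nonneg [of 1 1 0] by simp
next
  case (Suc b)
  have "h 2 (Suc b) 0 = 1 + (h 1 (Suc b) 0 + h 2 b 0) / 2"
    using h_Suc_Suc_0 [of 1 b] by (simp add: numeral_2_eq_2)
  moreover have "h 1 (Suc (Suc b)) 0 = 1 + h 1 (Suc b) 0 / 2"
    using h_Suc_Suc_0 [of 0 "Suc b"] by simp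
  ultimately show ?case
    using Suc.IH h_1_0_le_2 [of "Suc b"] by simp
qed

lemma h_antidiagonal_concave:
  "h a (Suc (Suc b)) 0 + h (Suc (Suc a)) b 0 \<le> 2 * h (Suc a) (Suc b) 0"
proof (induction "a + b" arbitrary: a b rule: less_induct)
  case less
  consider "a = 0" | "b = 0" | a' b' where "a = Suc a'" "b = Suc b'"
    by (meson not0_implies_Suc)
  then show ?case
  proof cases
    case 1
    then show ?thesis
      using h_2_0_le [of b] h_swap_12 [of 2 b 0] h_swap_12 [of 1 "Suc b" 0]
      by (simp add: numeral_2_eq_2)
  next
    case 2
    then show ?thesis
      using h_2_0_le [of a] h_swap_12 [of a 2 0] h_swap_12 [of "Suc a" 1 0]
      by (simp add: numeral_2_eq_2)
  next
    case 3
    have "h a' (Suc (Suc b)) 0 + h (Suc (Suc a')) b 0 \<le> 2 * h a (Suc b) 0"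
      using less [of a' b] 3 by simp
    moreover have "h a (Suc b) 0 + h (Suc (Suc a)) b' 0 \<le> 2 * h (Suc a) b 0"
      using less [of a b'] 3 by simp
    ultimately show ?thesis
      using h_Suc_Suc_0 [of a' "Suc b"] h_Suc_Suc_0 [of "Suc a" b']
        h_Suc_Suc_0 [of a b] 3
      by (simp add: field_simps)
  qed
qed

lemma h_Suc_Suc_0_le: "h (Suc a) (Suc b) 0 \<le> h a b 1 + 1"
proof (induction "a + b" arbitrary: a b rule: less_induct)
  case less
  consider "a = 0" | "b = 0" | a' b' where "a = Suc a'" "b = Suc b'"
    by (meson not0_implies_Suc)
  then show ?case
  proof cases
    case 1
    have "h 0 b 1 = h 1 b 0"
      by (metis h_swap_12 h_swap_23)
    then show ?thesis
      using 1 h_Suc_Suc_0 [of 0 b] h_nonneg [of 1 b 0] by simp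
  next
    case 2
    then show ?thesis
      using h_Suc_Suc_0 [of a 0] h_swap_23 [of a 0 1] h_nonneg [of a 1 0] by simp
  next
    case 3
    have "h a (Suc b) 0 \<le> h a' b 1 + 1"
      using less [of a' b] 3 by simp
    moreover have "h (Suc a) b 0 \<le> h a b' 1 + 1"
      using less [of a b'] 3 by simp
    moreover have "h a' (Suc b) 0 + h (Suc a) b' 0 \<le> 2 * h a b 0"
      using h_antidiagonal_concave [of a' b'] 3 by simp
    moreover have "h a b 1 = 1 + (h a' b 1 + h a b' 1 + h a b 0) / 3"
      using h_Suc_Suc_Suc [of a' b' 0] 3 by simp
    ultimately show ?thesis
      using h_Suc_Suc_0 [of a b] h_Suc_Suc_0 [of a' b] h_Suc_Suc_0 [of a b'] 3
      by (simp add: field_simps)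
  qed
qed

theorem lemma8:
  fixes l m :: nat
  assumes "l \<ge> m" and "m > 0"
  shows "h l m 0 \<le> h (l - 1) (m - 1) 1 + 1"
proof -
  obtain a b where "l = Suc a" "m = Suc b"
    using assms by (metis gr0_implies_Suc less_le_trans)
  then show ?thesis
    using h_Suc_Suc_0_le [of a b] by simp
qed

end
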